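(* Let $m\ge 3$ and $k\ge 1$ be integers with $m+2k-4\neq 0$. For every $f(x,u)\in C^{\infty}(\mathbb{R}^m,\mathcal{H}_k)$ the higher spin Laplace operator satisfies \begin{eqnarray*} \mathcal{D}_2 f&=&\Big(-R_k^2P_k^++\frac{2T_k^*R_kP_k^+}{m+2k-4}-\frac{2T_kQ_kP_k^-}{m+2k-4}-\frac{(m+2k)Q_k^2P_k^-}{m+2k-4}\Big)f\\ &=&\Big(-R_k^2P_k^++\frac{2R_kT_kP_k^-}{m+2k-4}-\frac{2Q_kT_k^*P_k^+}{m+2k-4}-\frac{(m+2k)Q_k^2P_k^-}{m+2k-4}\Big)f. \end{eqnarray*}
   Context: $\mathcal{C}l_m(\mathbb{C})$ is the complex Clifford algebra generated by an orthonormal basis $e_1,\dots,e_m$ of $\mathbb{R}^m$ with $e_ie_j+e_je_i=-2\delta_{ij}$; vectors $x=\sum x_ie_i\in\mathbb{R}^m$ are identified with elements of the algebra. $D_x=\sum_{i=1}^m e_i\partial_{x_i}$ and $D_u=\sum_i e_i\partial_{u_i}$ are Dirac operators (acting by left multiplication), $\Delta_x$ the Laplacian, $\langle u,D_x\rangle=\sum_i u_i\partial_{x_i}$, $\langle D_u,D_x\rangle=\sum_i\partial_{u_i}\partial_{x_i}$. $\mathcal{H}_k$ is the space of $\mathcal{C}l_m(\mathbb{C})$-valued harmonic polynomials in $u\in\mathbb{R}^m$ homogeneous of degree $k$, $\mathcal{M}_k$ the space of $\mathcal{C}l_m(\mathbb{C})$-valued left monogenic ($D_up=0$) polynomials homogeneous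 of degree $k$; $\mathcal{H}_k=\mathcal{M}_k\oplus u\mathcal{M}_{k-1}$, with projections $P_k^+=1+\frac{uD_u}{m+2k-2}:\mathcal{H}_k\to\mathcal{M}_k$ and $P_k^-=1-P_k^+=-\frac{uD_u}{m+2k-2}:\mathcal{H}_k\to u\mathcal{M}_{k-1}$ (applied in the variable $u$). $C^\infty(\mathbb{R}^m,V)$ denotes smooth functions $f(x,u)$ with $f(x,\cdot)\in V$ for each $x$. The Rarita–Schwinger type operators are: $R_k=P_k^+D_x$ on $C^\infty(\mathbb{R}^m,\mathcal{M}_k)$ (to $\mathcal{M}_k$-valued), $T_k=P_k^+D_x$ on $C^\infty(\mathbb{R}^m,u\mathcal{M}_{k-1})$ (to $\mathcal{M}_k$-valued), $T_k^*=P_k^-D_x$ on $C^\infty(\mathbb{R}^m,\mathcal{M}_k)$ (to $u\mathcal{M}_{k-1}$-valued), $Q_k=P_k^-D_x$ on $C^\infty(\mathbb{R}^m,u\mathcal{M}_{k-1})$ (to $u\mathcal{M}_{k-1}$-valued). The higher spin Laplace operator is $\mathcal{D}_2=\Delta_x-\frac{4\langle u,D_x\rangle\langle D_u,D_x\rangle}{m+2k-2}+\frac{4\|u\|^2\langle D_u,D_x\rangle^2}{(m+2k-2)(m+2k-4)}$, acting on $C^\infty(\mathbb{R}^m,\mathcal{H}_k)$. *)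

theory Defs
  imports "HOL-Analysis.Analysis"
begin

section \<open>The complex Clifford algebra Cl_m(C), m = CARD('n)\<close>

text \<open>Elements are complex linear combinations of the basis blades e_A, A a subset of the
  index set; blades are ordered by the (arbitrary, fixed) linear order on the index type.\<close>

type_synonym 'n cl = "complex ^ ('n set)"

definition cl_sign :: "'n::{finite,linorder} set \<Rightarrow> 'n set \<Rightarrow> complex" where
  "cl_sign A B = (-1) ^ (card {(a,b). a \<in> A \<and> b \<in> B \<and> b < a} + card (A \<inter> B))"

text \<open>e_A e_B = sign(A,B) e_(A symmetric-difference B), encoding e_i e_j + e_j e_i = -2 delta_ij.\<close>
definition cl_mult :: "'n::{finite,linorder} cl \<Rightarrow> 'n cl \<Rightarrow> 'n cl" (infixl "\<odot>" 70) where
  "a \<odot> b = (\<chi> C. \<Sum>A\<in>UNIV. \<Sum>B\<in>UNIV.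
      if (A - B) \<union> (B - A) = C then cl_sign A B * (a $ A) * (b $ B) else 0)"

definition cl_e :: "'n::{finite,linorder} \<Rightarrow> 'n cl" where
  "cl_e i = (\<chi> A. if A = {i} then 1 else 0)"

definition cl_vec :: "real ^ ('n::{finite,linorder}) \<Rightarrow> 'n cl" where
  "cl_vec x = (\<Sum>i\<in>UNIV. (x $ i) *\<^sub>R cl_e i)"

definition pd :: "'n::finite \<Rightarrow> (real ^ 'n \<Rightarrow> 'a::real_normed_vector) \<Rightarrow> real ^ 'n \<Rightarrow> 'a" where
  "pd i g y = vector_derivative (\<lambda>t. g (y + t *\<^sub>R axis i 1)) (at 0)"

coinductive smooth :: "('a::real_normed_vector \<Rightarrow> 'b::real_normed_vector) \<Rightarrow> bool" where
  "(\<forall>x. g differentiable (at x)) \<Longrightarrow> (\<forall>v. smooth (\<lambda>x. frechet_derivative g (at x) v)) \<Longrightarrow> smooth g"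

definition hom_poly :: "nat \<Rightarrow> (real ^ ('n::{finite,linorder}) \<Rightarrow> 'n cl) \<Rightarrow> bool" where
  "hom_poly k p \<longleftrightarrow> (\<exists>c :: ('n \<Rightarrow> nat) \<Rightarrow> 'n cl. \<forall>u.
      p u = (\<Sum>\<alpha>\<in>{\<alpha>::'n \<Rightarrow> nat. (\<Sum>i\<in>UNIV. \<alpha> i) = k}. (\<Prod>i\<in>UNIV. (u $ i) ^ (\<alpha> i)) *\<^sub>R c \<alpha>))"

definition harmonic :: "(real ^ ('n::{finite,linorder}) \<Rightarrow> 'n cl) \<Rightarrow> bool" where
  "harmonic p \<longleftrightarrow> (\<forall>u. (\<Sum>i\<in>UNIV. pd i (pd i p) u) = 0)"

definition in_H :: "nat \<Rightarrow> (real ^ ('n::{finite,linorder}) \<Rightarrow> 'n cl) \<Rightarrow> bool" where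
  "in_H k p \<longleftrightarrow> hom_poly k p \<and> harmonic p"

type_synonym 'n clfun = "real ^ 'n \<Rightarrow> real ^ 'n \<Rightarrow> 'n cl"

definition dx :: "('n::{finite,linorder}) \<Rightarrow> 'n clfun \<Rightarrow> 'n clfun" where
  "dx i f = (\<lambda>x u. pd i (\<lambda>y. f y u) x)"

definition du :: "('n::{finite,linorder}) \<Rightarrow> 'n clfun \<Rightarrow> 'n clfun" where
  "du i f = (\<lambda>x u. pd i (f x) u)"

definition Dx :: "('n::{finite,linorder}) clfun \<Rightarrow> 'n clfun" where
  "Dx f = (\<lambda>x u. \<Sum>i\<in>UNIV. cl_e i \<odot> dx i f x u)"

definition Du :: "('n::{finite,linorder}) clfun \<Rightarrow> 'n clfun" where
  "Du f = (\<lambda>x u. \<Sum>i\<in>UNIV. cl_e i \<odot> du i f x u)"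

definition Lapx :: "('n::{finite,linorder}) clfun \<Rightarrow> 'n clfun" where
  "Lapx f = (\<lambda>x u. \<Sum>i\<in>UNIV. dx i (dx i f) x u)"

definition uDx :: "('n::{finite,linorder}) clfun \<Rightarrow> 'n clfun" where
  "uDx f = (\<lambda>x u. \<Sum>i\<in>UNIV. (u $ i) *\<^sub>R dx i f x u)"

definition DuDx :: "('n::{finite,linorder}) clfun \<Rightarrow> 'n clfun" where
  "DuDx f = (\<lambda>x u. \<Sum>i\<in>UNIV. du i (dx i f) x u)"

definition Pp :: "nat \<Rightarrow> ('n::{finite,linorder}) clfun \<Rightarrow> 'n clfun" where
  "Pp k f = (\<lambda>x u. f x u + (1 / (real CARD('n) + 2 * real k - 2)) *\<^sub>R (cl_vec u \<odot> Du f x u))"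

definition Pm :: "nat \<Rightarrow> ('n::{finite,linorder}) clfun \<Rightarrow> 'n clfun" where
  "Pm k f = (\<lambda>x u. - ((1 / (real CARD('n) + 2 * real k - 2)) *\<^sub>R (cl_vec u \<odot> Du f x u)))"

text \<open>Rarita-Schwinger type operators (domains as in the paper; formulas P^+D_x resp. P^-D_x).\<close>
definition R :: "nat \<Rightarrow> ('n::{finite,linorder}) clfun \<Rightarrow> 'n clfun" where
  "R k f = Pp k (Dx f)"
definition T :: "nat \<Rightarrow> ('n::{finite,linorder}) clfun \<Rightarrow> 'n clfun" where
  "T k f = Pp k (Dx f)"
definition Tstar :: "nat \<Rightarrow> ('n::{finite,linorder}) clfun \<Rightarrow> 'n clfun" where
  "Tstar k f = Pm k (Dx f)"
definition Q :: "nat \<Rightarrow> ('n::{finite,linorder}) clfun \<Rightarrow> 'n clfun" where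
  "Q k f = Pm k (Dx f)"

definition D2 :: "nat \<Rightarrow> ('n::{finite,linorder}) clfun \<Rightarrow> 'n clfun" where
  "D2 k f = (\<lambda>x u. Lapx f x u
     - (4 / (real CARD('n) + 2 * real k - 2)) *\<^sub>R uDx (DuDx f) x u
     + (4 / ((real CARD('n) + 2 * real k - 2) * (real CARD('n) + 2 * real k - 4)))
         *\<^sub>R ((norm u)\<^sup>2 *\<^sub>R DuDx (DuDx f) x u))"

end

theory Submission
  imports Defs
begin

text \<open>All operators involved are built from \<open>x\<close>- and \<open>u\<close>-derivatives and from Clifford
  multiplication by \<open>u\<close>. The Clifford relations \<open>e\<^sub>ie\<^sub>j + e\<^sub>je\<^sub>i = -2\<delta>\<^sub>i\<^sub>j\<close> and the symmetry of
  second derivatives give commutation relations between \<open>u\<close>, \<open>D\<^sub>u\<close>, \<open>D\<^sub>x\<close>, \<open>\<langle>u,D\<^sub>x\<rangle>\<close>,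
  \<open>\<langle>D\<^sub>u,D\<^sub>x\<rangle>\<close>, the Euler operator \<open>E\<^sub>u = \<langle>u,\<nabla>\<^sub>u\<rangle>\<close> and the Laplacian \<open>\<Delta>\<^sub>u\<close>, which bring every
  composite operator into a normal form; on \<open>\<H>\<^sub>k\<close> the operator \<open>E\<^sub>u\<close> acts as \<open>k\<close> and \<open>\<Delta>\<^sub>u\<close> as \<open>0\<close>.
  The first decomposition of \<open>\<D>\<^sub>2\<close> is then an identity between normal forms whose coefficients
  are polynomials in \<open>1/(m+2k-2)\<close> and \<open>1/(m+2k-4)\<close>. The second follows from the first: \<open>P\<^sup>+\<close> and
  \<open>P\<^sup>-\<close> are complementary projections on \<open>\<H>\<^sub>k\<close> commuting with \<open>\<Delta>\<^sub>x\<close>, and \<open>D\<^sub>x\<^sup>2 = -\<Delta>\<^sub>x\<close>.\<close>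

section \<open>Clifford multiplication by basis vectors\<close>

lemma cl_mult_component:
  "(a \<odot> b) $ C = (\<Sum>A\<in>UNIV. \<Sum>B\<in>UNIV. a $ A * b $ B * (if sym_diff A B = C then cl_sign A B else 0))"
  unfolding cl_mult_def by (auto intro!: sum.cong)

lemma bilinear_cl_mult: "bilinear ((\<odot>) :: 'n::{finite,linorder} cl \<Rightarrow> 'n cl \<Rightarrow> 'n cl)"
  unfolding bilinear_def
  by (auto intro!: linearI simp: vec_eq_iff cl_mult_component ring_distribs sum.distrib
      scaleR_conv_of_real[where 'a=complex] sum_distrib_left mult_ac)

interpretation cl_mult: bounded_bilinear "(\<odot>) :: 'n::{finite,linorder} cl \<Rightarrow> 'n cl \<Rightarrow> 'n cl"
  using bilinear_cl_mult by (simp add: bilinear_conv_bounded_bilinear)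

lemma cl_vec_mult: "cl_vec u \<odot> g = (\<Sum>i\<in>UNIV. (u $ i) *\<^sub>R (cl_e i \<odot> g))"
  unfolding cl_vec_def by (simp add: cl_mult.sum_left cl_mult.scaleR_left)

definition count_less :: "'n::linorder \<Rightarrow> 'n set \<Rightarrow> nat" where
  "count_less i B = card {b\<in>B. b < i}"

lemma cl_sign_singleton:
  fixes i :: "'n::{finite,linorder}"
  shows "cl_sign {i} B = (-1) ^ count_less i B * (if i \<in> B then -1 else 1)"
proof -
  have "{(a,b). a \<in> {i} \<and> b \<in> B \<and> b < a} = (\<lambda>b. (i,b)) ` {b\<in>B. b < i}" by auto
  then have "card {(a,b). a \<in> {i} \<and> b \<in> B \<and> b < a} = count_less i B"
    unfolding count_less_def by (simp add: card_image inj_on_def)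
  then show ?thesis unfolding cl_sign_def by (auto simp: power_add)
qed

lemma count_less_sym_diff_ge:
  "j \<ge> i \<Longrightarrow> count_less i (sym_diff {j} C) = count_less i C"
  unfolding count_less_def by (rule arg_cong[where f=card]) auto

lemma minus_one_power_card_sym_diff_singleton:
  assumes "finite X"
  shows "(-1::complex) ^ card (sym_diff {i} X) = - ((-1) ^ card X)"
proof (cases "i \<in> X")
  case True
  then have "sym_diff {i} X = X - {i}" by auto
  moreover have "card X = Suc (card (X - {i}))"
    using True assms by (metis card_Suc_Diff1)
  ultimately show ?thesis by simp
next
  case False
  then have "sym_diff {i} X = insert i X" by auto
  then show ?thesis using False assms by simp
qed

lemma minus_one_power_count_less_sym_diff_lt:
  fixes i j :: "'n::{finite,linorder}"
  assumes "j < i"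
  shows "(-1::complex) ^ count_less i (sym_diff {j} C) = - ((-1) ^ count_less i C)"
proof -
  have "{b\<in>sym_diff {j} C. b < i} = sym_diff {j} {b\<in>C. b < i}" using assms by auto
  then show ?thesis
    unfolding count_less_def using minus_one_power_card_sym_diff_singleton[of "{b\<in>C. b < i}" j] by simp
qed

lemma cl_e_mult_component:
  fixes i :: "'n::{finite,linorder}"
  shows "(cl_e i \<odot> g) $ C = cl_sign {i} (sym_diff {i} C) * g $ sym_diff {i} C"
proof -
  have e_component: "cl_e i $ A = (if A = {i} then 1 else 0)" for A
    unfolding cl_e_def by simp
  have "(cl_e i \<odot> g) $ C = (\<Sum>A\<in>UNIV. \<Sum>B\<in>UNIV.
      if sym_diff A B = C then cl_sign A B * (if A = {i} then 1 else 0) * g $ B else 0)"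
    unfolding cl_mult_def e_component by simp
  also have "\<dots> = (\<Sum>A\<in>UNIV. if A = {i} then
      (\<Sum>B\<in>UNIV. if sym_diff {i} B = C then cl_sign {i} B * g $ B else 0) else 0)"
    by (rule sum.cong) (auto cong: if_cong)
  also have "\<dots> = (\<Sum>B\<in>UNIV. if sym_diff {i} B = C then cl_sign {i} B * g $ B else 0)"
    by simp
  also have "\<dots> = (\<Sum>B\<in>UNIV. if B = sym_diff {i} C then cl_sign {i} B * g $ B else 0)"
    by (rule sum.cong) auto
  finally show ?thesis by simp
qed

text \<open>The Clifford relations \<open>e\<^sub>ie\<^sub>j + e\<^sub>je\<^sub>i = -2\<delta>\<^sub>i\<^sub>j\<close>, in the form acting on an arbitrary element.\<close>

lemma cl_e_mult_cl_e_mult_self: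
  fixes i :: "'n::{finite,linorder}"
  shows "cl_e i \<odot> (cl_e i \<odot> g) = - g"
proof -
  have "sym_diff {i} (sym_diff {i} C) = C" for C by auto
  then show ?thesis
    by (simp add: vec_eq_iff cl_e_mult_component cl_sign_singleton count_less_sym_diff_ge
      power_mult_distrib[symmetric] flip: power_add)
qed

lemma cl_e_mult_cl_e_mult_anticomm:
  fixes i j :: "'n::{finite,linorder}"
  assumes "i \<noteq> j"
  shows "cl_e i \<odot> (cl_e j \<odot> g) = - (cl_e j \<odot> (cl_e i \<odot> g))"
proof -
  have sign: "cl_sign {i} (sym_diff {i} C) * cl_sign {j} (sym_diff {j} (sym_diff {i} C))
      = - (cl_sign {j} (sym_diff {j} C) * cl_sign {i} (sym_diff {i} (sym_diff {j} C)))"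
    if "j < i" for i j :: 'n and C
    using that by (simp add: cl_sign_singleton count_less_sym_diff_ge minus_one_power_count_less_sym_diff_lt)
  have "sym_diff {i} (sym_diff {j} C) = sym_diff {j} (sym_diff {i} C)" for C by auto
  moreover have "cl_sign {i} (sym_diff {i} C) * cl_sign {j} (sym_diff {j} (sym_diff {i} C))
      = - (cl_sign {j} (sym_diff {j} C) * cl_sign {i} (sym_diff {i} (sym_diff {j} C)))" for C
    using assms sign[of j i C] sign[of i j C] by (cases "j < i") auto
  ultimately show ?thesis
    by (simp add: vec_eq_iff cl_e_mult_component mult.assoc[symmetric])
qed

lemma cl_e_anticommutator:
  fixes i j :: "'n::{finite,linorder}"
  shows "cl_e i \<odot> (cl_e j \<odot> g) + cl_e j \<odot> (cl_e i \<odot> g) = (if i = j then -2 else 0) *\<^sub>R g"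
  using cl_e_mult_cl_e_mult_anticomm[of i j g] cl_e_mult_cl_e_mult_self[of i g]
  by (cases "i = j") (auto simp: scaleR_2)

lemma cl_e_double_sum_anticommutator:
  fixes k :: "'n::{finite,linorder} \<Rightarrow> 'n \<Rightarrow> 'n cl"
  shows "(\<Sum>i\<in>UNIV. cl_e i \<odot> (\<Sum>j\<in>UNIV. cl_e j \<odot> k i j)) + (\<Sum>j\<in>UNIV. cl_e j \<odot> (\<Sum>i\<in>UNIV. cl_e i \<odot> k i j))
     = (-2) *\<^sub>R (\<Sum>i\<in>UNIV. k i i)"
proof -
  have "(\<Sum>i\<in>UNIV. cl_e i \<odot> (\<Sum>j\<in>UNIV. cl_e j \<odot> k i j)) + (\<Sum>j\<in>UNIV. cl_e j \<odot> (\<Sum>i\<in>UNIV. cl_e i \<odot> k i j))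
     = (\<Sum>i\<in>UNIV. \<Sum>j\<in>UNIV. cl_e i \<odot> (cl_e j \<odot> k i j) + cl_e j \<odot> (cl_e i \<odot> k i j))"
    by (simp add: cl_mult.sum_right sum.distrib) (rule sum.swap)
  also have "\<dots> = (\<Sum>i\<in>UNIV. \<Sum>j\<in>UNIV. if j = i then (-2) *\<^sub>R k i j else 0)"
    by (intro sum.cong refl) (simp add: cl_e_anticommutator eq_commute)
  finally show ?thesis by (simp add: scaleR_sum_right)
qed

lemma cl_e_double_sum_symmetric:
  fixes k :: "'n::{finite,linorder} \<Rightarrow> 'n \<Rightarrow> 'n cl"
  assumes "\<And>i j. k i j = k j i"
  shows "(\<Sum>i\<in>UNIV. cl_e i \<odot> (\<Sum>j\<in>UNIV. cl_e j \<odot> k i j)) = - (\<Sum>i\<in>UNIV. k i i)"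
proof -
  have "(\<Sum>j\<in>UNIV. cl_e j \<odot> (\<Sum>i\<in>UNIV. cl_e i \<odot> k i j)) = (\<Sum>i\<in>UNIV. cl_e i \<odot> (\<Sum>j\<in>UNIV. cl_e j \<odot> k i j))"
    using assms by simp
  then have "(2::real) *\<^sub>R (\<Sum>i\<in>UNIV. cl_e i \<odot> (\<Sum>j\<in>UNIV. cl_e j \<odot> k i j)) = 2 *\<^sub>R (- (\<Sum>i\<in>UNIV. k i i))"
    using cl_e_double_sum_anticommutator[of k] by (simp add: scaleR_2)
  then show ?thesis by (simp only: scaleR_cancel_left) simp
qed

lemma cl_vec_anticommutator:
  fixes k :: "'n::{finite,linorder} \<Rightarrow> 'n cl"
  shows "(\<Sum>i\<in>UNIV. cl_e i \<odot> (cl_vec u \<odot> k i)) + cl_vec u \<odot> (\<Sum>i\<in>UNIV. cl_e i \<odot> k i)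
     = (-2) *\<^sub>R (\<Sum>i\<in>UNIV. (u $ i) *\<^sub>R k i)"
proof -
  have "(\<Sum>i\<in>UNIV. cl_e i \<odot> (cl_vec u \<odot> k i)) = (\<Sum>i\<in>UNIV. cl_e i \<odot> (\<Sum>j\<in>UNIV. cl_e j \<odot> ((u $ j) *\<^sub>R k i)))"
    by (simp add: cl_vec_mult cl_mult.scaleR_right)
  moreover have "cl_vec u \<odot> (\<Sum>i\<in>UNIV. cl_e i \<odot> k i) = (\<Sum>j\<in>UNIV. cl_e j \<odot> (\<Sum>i\<in>UNIV. cl_e i \<odot> ((u $ j) *\<^sub>R k i)))"
    by (simp add: cl_vec_mult cl_mult.scaleR_right flip: scaleR_sum_right)
  ultimately show ?thesis
    using cl_e_double_sum_anticommutator[of "\<lambda>i j. (u $ j) *\<^sub>R k i"] by simp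
qed

section \<open>Smooth maps and symmetry of second derivatives\<close>

lemma smooth_differentiable: "smooth G \<Longrightarrow> G differentiable (at x)"
  by (erule smooth.cases) auto

lemma smooth_frechet_derivative: "smooth G \<Longrightarrow> smooth (\<lambda>x. frechet_derivative G (at x) v)"
  by (erule smooth.cases) auto

lemma smooth_has_derivative: "smooth G \<Longrightarrow> (G has_derivative frechet_derivative G (at x)) (at x)"
  using smooth_differentiable frechet_derivative_works by blast

lemma linear_frechet_derivative_smooth: "smooth G \<Longrightarrow> linear (frechet_derivative G (at x))"
  using smooth_has_derivative has_derivative_linear by blast

lemma frechet_derivative_eq: "(F has_derivative F') (at x) \<Longrightarrow> frechet_derivative F (at x) v = F' v"
  using frechet_derivative_at by metis

text \<open>The closure properties of \<open>smooth\<close> are all proved by coinduction with an invariant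
  that is stable under taking directional derivatives.\<close>

lemma smooth_const: "smooth (\<lambda>x::'a::real_normed_vector. c::'b::real_normed_vector)"
proof (rule smooth.coinduct[where X = "\<lambda>K. \<exists>c. K = (\<lambda>x. c)"])
  fix K :: "'a \<Rightarrow> 'b" assume "\<exists>c. K = (\<lambda>x. c)"
  then obtain c where K: "K = (\<lambda>x. c)" by blast
  have "(K has_derivative (\<lambda>v. 0)) (at x)" for x unfolding K by simp
  then show "\<exists>g. K = g \<and> (\<forall>x. g differentiable at x) \<and>
      (\<forall>v. (\<exists>c. (\<lambda>x. frechet_derivative g (at x) v) = (\<lambda>x. c)) \<or> smooth (\<lambda>x. frechet_derivative g (at x) v))"
    using frechet_derivative_eq unfolding differentiable_def by blast
qed auto

lemma smooth_bounded_linear_compose: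
  assumes L: "bounded_linear L" and G: "smooth G"
  shows "smooth (\<lambda>x. L (G x))"
proof (rule smooth.coinduct[where X = "\<lambda>H. \<exists>G. smooth G \<and> H = (\<lambda>x. L (G x))"])
  fix H assume "\<exists>G. smooth G \<and> H = (\<lambda>x. L (G x))"
  then obtain G where G: "smooth G" and H: "H = (\<lambda>x. L (G x))" by blast
  have "(H has_derivative (\<lambda>v. L (frechet_derivative G (at x) v))) (at x)" for x
    unfolding H by (rule bounded_linear.has_derivative[OF L smooth_has_derivative[OF G]])
  then show "\<exists>g. H = g \<and> (\<forall>x. g differentiable at x) \<and>
      (\<forall>v. (\<exists>G. smooth G \<and> (\<lambda>x. frechet_derivative g (at x) v) = (\<lambda>x. L (G x))) \<or>
           smooth (\<lambda>x. frechet_derivative g (at x) v))"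
    using frechet_derivative_eq smooth_frechet_derivative[OF G] unfolding differentiable_def by blast
qed (use G in blast)

lemma smooth_add:
  assumes G: "smooth G" and H: "smooth H"
  shows "smooth (\<lambda>x. G x + H x)"
proof (rule smooth.coinduct[where X = "\<lambda>K. \<exists>G H. smooth G \<and> smooth H \<and> K = (\<lambda>x. G x + H x)"])
  fix K assume "\<exists>G H. smooth G \<and> smooth H \<and> K = (\<lambda>x. G x + H x)"
  then obtain G H where G: "smooth G" and H: "smooth H" and K: "K = (\<lambda>x. G x + H x)" by blast
  have "(K has_derivative (\<lambda>v. frechet_derivative G (at x) v + frechet_derivative H (at x) v)) (at x)" for x
    unfolding K by (rule has_derivative_add[OF smooth_has_derivative[OF G] smooth_has_derivative[OF H]])
  then show "\<exists>g. K = g \<and> (\<forall>x. g differentiable at x) \<and>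
      (\<forall>v. (\<exists>G H. smooth G \<and> smooth H \<and> (\<lambda>x. frechet_derivative g (at x) v) = (\<lambda>x. G x + H x)) \<or>
           smooth (\<lambda>x. frechet_derivative g (at x) v))"
    using frechet_derivative_eq smooth_frechet_derivative[OF G] smooth_frechet_derivative[OF H]
    unfolding differentiable_def by blast
qed (use G H in blast)

lemma smooth_scaleR_bounded_linear:
  fixes l :: "'a::real_normed_vector \<Rightarrow> real"
  assumes l: "bounded_linear l" and G: "smooth G"
  shows "smooth (\<lambda>x. l x *\<^sub>R G x)"
proof (rule smooth.coinduct[where X = "\<lambda>K. \<exists>G H. smooth G \<and> smooth H \<and> K = (\<lambda>x. G x + l x *\<^sub>R H x)"])
  show "\<exists>G' H. smooth G' \<and> smooth H \<and> (\<lambda>x. l x *\<^sub>R G x) = (\<lambda>x. G' x + l x *\<^sub>R H x)"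
    using G smooth_const by fastforce
next
  fix K :: "'a \<Rightarrow> 'b" assume "\<exists>G H. smooth G \<and> smooth H \<and> K = (\<lambda>x. G x + l x *\<^sub>R H x)"
  then obtain G H where G: "smooth G" and H: "smooth H" and K: "K = (\<lambda>x. G x + l x *\<^sub>R H x)"
    by blast
  define G' where "G' v x = frechet_derivative G (at x) v + l v *\<^sub>R H x" for v x
  define H' where "H' v x = frechet_derivative H (at x) v" for v x
  have K_deriv: "(K has_derivative (\<lambda>v. frechet_derivative G (at x) v +
      (l x *\<^sub>R frechet_derivative H (at x) v + l v *\<^sub>R H x))) (at x)" for x
    unfolding K by (intro has_derivative_add smooth_has_derivative[OF G] has_derivative_scaleR
        smooth_has_derivative[OF H] bounded_linear.has_derivative[OF l has_derivative_ident])
  have "K differentiable (at x)" and "frechet_derivative K (at x) v = G' v x + l x *\<^sub>R H' v x" for x v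
    using K_deriv frechet_derivative_eq[OF K_deriv]
    by (auto simp: differentiable_def G'_def H'_def algebra_simps)
  moreover have "smooth (G' v)" "smooth (H' v)" for v
    unfolding G'_def H'_def
    by (intro smooth_add smooth_frechet_derivative G smooth_bounded_linear_compose[OF
          bounded_linear_scaleR_right] H)+
  ultimately show "\<exists>g. K = g \<and> (\<forall>x. g differentiable at x) \<and>
      (\<forall>v. (\<exists>G H. smooth G \<and> smooth H \<and> (\<lambda>x. frechet_derivative g (at x) v) = (\<lambda>x. G x + l x *\<^sub>R H x)) \<or>
           smooth (\<lambda>x. frechet_derivative g (at x) v))"
    by blast
qed

lemma second_difference_mean_value:
  fixes G :: "'a::real_normed_vector \<Rightarrow> 'b::real_inner" and H :: "'a \<Rightarrow> 'b" and p v w :: 'a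
  assumes G: "smooth G" and H: "linear H"
  defines "Gv \<equiv> \<lambda>q. frechet_derivative G (at q) v"
  obtains t where "0 < t" "t < 1" and
    "norm (G (p + h *\<^sub>R v + h *\<^sub>R w) - G (p + h *\<^sub>R v) - G (p + h *\<^sub>R w) + G p - (h * h) *\<^sub>R H w)
      \<le> norm (h *\<^sub>R ((Gv (p + ((t * h) *\<^sub>R v + h *\<^sub>R w)) - Gv p - H ((t * h) *\<^sub>R v + h *\<^sub>R w))
                   - (Gv (p + (t * h) *\<^sub>R v) - Gv p - H ((t * h) *\<^sub>R v))))"
proof -
  define \<phi> where "\<phi> t = G (p + (t * h) *\<^sub>R v + h *\<^sub>R w) - G (p + (t * h) *\<^sub>R v) - (t * h * h) *\<^sub>R H w"
    for t
  define \<phi>' where "\<phi>' t s = frechet_derivative G (at (p + (t * h) *\<^sub>R v + h *\<^sub>R w)) ((s * h) *\<^sub>R v)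
      - frechet_derivative G (at (p + (t * h) *\<^sub>R v)) ((s * h) *\<^sub>R v) - (s * h * h) *\<^sub>R H w" for t s
  have "((\<lambda>t. p + (t * h) *\<^sub>R v + h *\<^sub>R w) has_derivative (\<lambda>s. (s * h) *\<^sub>R v)) (at t)"
    "((\<lambda>t. p + (t * h) *\<^sub>R v) has_derivative (\<lambda>s. (s * h) *\<^sub>R v)) (at t)"
    "((\<lambda>t. (t * h * h) *\<^sub>R H w) has_derivative (\<lambda>s. (s * h * h) *\<^sub>R H w)) (at t)" for t
    by (auto intro!: derivative_eq_intros simp: algebra_simps)
  then have \<phi>_deriv: "(\<phi> has_derivative \<phi>' t) (at t)" for t
    unfolding \<phi>_def \<phi>'_def
    by (intro has_derivative_diff has_derivative_compose[OF _ smooth_has_derivative[OF G]])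
  then have "continuous_on {0..1} \<phi>"
    using has_derivative_continuous by (blast intro: continuous_at_imp_continuous_on)
  then obtain t where t: "t \<in> {0<..<1}" and mvt: "norm (\<phi> 1 - \<phi> 0) \<le> norm (\<phi>' t (1 - 0))"
    using mvt_general[OF zero_less_one _ \<phi>_deriv] by blast
  have "frechet_derivative G (at q) (h *\<^sub>R v) = h *\<^sub>R Gv q" for q
    unfolding Gv_def using linear_scale[OF linear_frechet_derivative_smooth[OF G]] by blast
  moreover have "H ((t * h) *\<^sub>R v + h *\<^sub>R w) - H ((t * h) *\<^sub>R v) = h *\<^sub>R H w"
    using linear_add[OF H] linear_scale[OF H] by simp
  ultimately have "\<phi>' t (1 - 0) = h *\<^sub>R ((Gv (p + ((t * h) *\<^sub>R v + h *\<^sub>R w)) - Gv p - H ((t * h) *\<^sub>R v + h *\<^sub>R w))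
                   - (Gv (p + (t * h) *\<^sub>R v) - Gv p - H ((t * h) *\<^sub>R v)))"
    unfolding \<phi>'_def by (simp add: algebra_simps)
  moreover have "\<phi> 1 - \<phi> 0 = G (p + h *\<^sub>R v + h *\<^sub>R w) - G (p + h *\<^sub>R v) - G (p + h *\<^sub>R w) + G p
      - (h * h) *\<^sub>R H w"
    by (simp add: \<phi>_def algebra_simps)
  ultimately show thesis
    using that[of t] mvt t by simp
qed

lemma norm_scaled_segment_le:
  assumes "0 < t" "t < 1" "0 < h"
  shows "norm ((t * h) *\<^sub>R v + h *\<^sub>R w) \<le> h * (norm v + norm w)"
    and "norm ((t * h) *\<^sub>R v) \<le> h * (norm v + norm w)"
proof -
  have "norm ((t * h) *\<^sub>R v) \<le> h * norm v"
    using assms mult_right_mono[of t 1 "h * norm v"] by (simp add: mult.assoc)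
  moreover have "norm (h *\<^sub>R w) = h * norm w" "0 \<le> h * norm w"
    using assms by simp_all
  ultimately show "norm ((t * h) *\<^sub>R v + h *\<^sub>R w) \<le> h * (norm v + norm w)"
    and "norm ((t * h) *\<^sub>R v) \<le> h * (norm v + norm w)"
    using norm_triangle_ineq[of "(t * h) *\<^sub>R v" "h *\<^sub>R w"] by (simp_all add: algebra_simps)
qed

lemma second_difference_estimate:
  fixes G :: "'a::real_normed_vector \<Rightarrow> 'b::real_inner" and p v w :: 'a
  assumes G: "smooth G" and e: "e > 0"
  defines "H \<equiv> frechet_derivative (\<lambda>q. frechet_derivative G (at q) v) (at p)"
  obtains d where "d > 0" and "\<And>h. 0 < h \<Longrightarrow> h < d \<Longrightarrow>
    norm (G (p + h *\<^sub>R v + h *\<^sub>R w) - G (p + h *\<^sub>R v) - G (p + h *\<^sub>R w) + G p - (h * h) *\<^sub>R H w)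
      \<le> e * (h * h)"
proof -
  define Gv where "Gv = (\<lambda>q. frechet_derivative G (at q) v)"
  have "(Gv has_derivative H) (at p)"
    unfolding Gv_def H_def by (rule smooth_has_derivative[OF smooth_frechet_derivative[OF G]])
  then have linH: "linear H" by (rule has_derivative_linear)
  define c where "c = norm v + norm w"
  have c0: "c \<ge> 0" unfolding c_def by simp
  define \<epsilon> where "\<epsilon> = e / (2 * (c + 1))"
  have \<epsilon>: "\<epsilon> > 0" unfolding \<epsilon>_def using e c0 by simp
  then obtain d where d: "d > 0" and dd: "\<And>y. norm (y - p) < d \<Longrightarrow>
      norm (Gv y - Gv p - H (y - p)) \<le> \<epsilon> * norm (y - p)"
    using \<open>(Gv has_derivative H) (at p)\<close> unfolding has_derivative_at_alt by blast
  show thesis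
  proof (rule that[of "d / (c + 1)"])
    show "d / (c + 1) > 0" using d c0 by simp
    fix h :: real assume h0: "0 < h" and "h < d / (c + 1)"
    then have hc: "h * c < d" using c0 by (simp add: field_simps)
    obtain t where t: "0 < t" "t < 1" and mvt:
      "norm (G (p + h *\<^sub>R v + h *\<^sub>R w) - G (p + h *\<^sub>R v) - G (p + h *\<^sub>R w) + G p - (h * h) *\<^sub>R H w)
        \<le> norm (h *\<^sub>R ((Gv (p + ((t * h) *\<^sub>R v + h *\<^sub>R w)) - Gv p - H ((t * h) *\<^sub>R v + h *\<^sub>R w))
                     - (Gv (p + (t * h) *\<^sub>R v) - Gv p - H ((t * h) *\<^sub>R v))))"
      using second_difference_mean_value[OF G linH] unfolding Gv_def by metis
    define z1 where "z1 = (t * h) *\<^sub>R v + h *\<^sub>R w"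
    define z2 where "z2 = (t * h) *\<^sub>R v"
    have "norm z1 \<le> h * c" "norm z2 \<le> h * c"
      using norm_scaled_segment_le[OF t h0] unfolding z1_def z2_def c_def by auto
    then have "norm (Gv (p + z1) - Gv p - H z1) \<le> \<epsilon> * (h * c)"
      and "norm (Gv (p + z2) - Gv p - H z2) \<le> \<epsilon> * (h * c)"
      using dd[of "p + z1"] dd[of "p + z2"] hc \<epsilon> mult_left_mono[of _ "h * c" \<epsilon>]
      by (auto intro: order_trans)
    then have "norm (Gv (p + z1) - Gv p - H z1) + norm (Gv (p + z2) - Gv p - H z2) \<le> 2 * (\<epsilon> * (h * c))"
      by linarith
    note mvt = mvt[folded z1_def z2_def]
    also have "norm (h *\<^sub>R ((Gv (p + z1) - Gv p - H z1) - (Gv (p + z2) - Gv p - H z2)))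
        \<le> h * (norm (Gv (p + z1) - Gv p - H z1) + norm (Gv (p + z2) - Gv p - H z2))"
      using mult_left_mono[OF norm_triangle_ineq4 less_imp_le[OF h0]]
      by (simp only: norm_scaleR abs_of_pos[OF h0])
    also have "\<dots> \<le> h * (2 * (\<epsilon> * (h * c)))"
      using h0 \<open>norm _ + norm _ \<le> _\<close> by (simp add: mult_left_mono)
    also have "\<dots> \<le> e * (h * h)"
      using h0 e c0 by (simp add: \<epsilon>_def field_simps mult_left_mono)
    finally show "norm (G (p + h *\<^sub>R v + h *\<^sub>R w) - G (p + h *\<^sub>R v) - G (p + h *\<^sub>R w) + G p
        - (h * h) *\<^sub>R H w) \<le> e * (h * h)" .
  qed
qed

lemma second_difference_quotient_tendsto:
  fixes G :: "'a::real_normed_vector \<Rightarrow> 'b::real_inner"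
  assumes G: "smooth G"
  shows "((\<lambda>h. (1 / h\<^sup>2) *\<^sub>R (G (p + h *\<^sub>R v + h *\<^sub>R w) - G (p + h *\<^sub>R v) - G (p + h *\<^sub>R w) + G p))
     \<longlongrightarrow> frechet_derivative (\<lambda>q. frechet_derivative G (at q) v) (at p) w) (at_right 0)"
proof -
  define S where "S h = G (p + h *\<^sub>R v + h *\<^sub>R w) - G (p + h *\<^sub>R v) - G (p + h *\<^sub>R w) + G p" for h
  define D where "D = frechet_derivative (\<lambda>q. frechet_derivative G (at q) v) (at p) w"
  have "((\<lambda>h. (1 / h\<^sup>2) *\<^sub>R S h) \<longlongrightarrow> D) (at_right 0)"
  proof (rule tendstoI)
    fix e :: real assume "e > 0"
    then obtain d where "d > 0" and d: "\<And>h. 0 < h \<Longrightarrow> h < d \<Longrightarrow> norm (S h - (h * h) *\<^sub>R D) \<le> e / 2 * (h * h)"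
      using second_difference_estimate[OF G, of "e / 2"] unfolding S_def D_def by (metis half_gt_zero)
    have "dist ((1 / h\<^sup>2) *\<^sub>R S h) D < e" if "0 < h" "h < d" for h
    proof -
      have "dist ((1 / h\<^sup>2) *\<^sub>R S h) D = norm ((1 / (h * h)) *\<^sub>R (S h - (h * h) *\<^sub>R D))"
        using \<open>0 < h\<close> by (simp add: dist_norm power2_eq_square algebra_simps)
      also have "\<dots> = norm (S h - (h * h) *\<^sub>R D) / (h * h)"
        using \<open>0 < h\<close> by simp
      also have "\<dots> \<le> e / 2"
        using d[OF that] \<open>0 < h\<close> by (simp add: divide_le_eq)
      finally show ?thesis using \<open>e > 0\<close> by simp
    qed
    then show "\<forall>\<^sub>F h in at_right 0. dist ((1 / h\<^sup>2) *\<^sub>R S h) D < e"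
      unfolding eventually_at_right_field using \<open>d > 0\<close> by blast
  qed
  then show ?thesis unfolding S_def D_def .
qed

text \<open>Schwarz's theorem, via the symmetry of the second difference quotient in \<open>v\<close> and \<open>w\<close>.\<close>

lemma smooth_frechet_derivative_commute:
  fixes G :: "'a::real_normed_vector \<Rightarrow> 'b::real_inner"
  assumes G: "smooth G"
  shows "frechet_derivative (\<lambda>q. frechet_derivative G (at q) v) (at p) w
       = frechet_derivative (\<lambda>q. frechet_derivative G (at q) w) (at p) v"
proof -
  have "(\<lambda>h. (1 / h\<^sup>2) *\<^sub>R (G (p + h *\<^sub>R v + h *\<^sub>R w) - G (p + h *\<^sub>R v) - G (p + h *\<^sub>R w) + G p))
      = (\<lambda>h. (1 / h\<^sup>2) *\<^sub>R (G (p + h *\<^sub>R w + h *\<^sub>R v) - G (p + h *\<^sub>R w) - G (p + h *\<^sub>R v) + G p))"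
    by (simp add: algebra_simps)
  then show ?thesis
    using tendsto_unique[OF trivial_limit_at_right_real second_difference_quotient_tendsto[OF G, of p v w]]
      second_difference_quotient_tendsto[OF G, of p w v] by simp
qed

definition smooth2 :: "('a::real_normed_vector \<Rightarrow> 'b::real_normed_vector \<Rightarrow> 'c::real_normed_vector) \<Rightarrow> bool"
  where "smooth2 g \<longleftrightarrow> smooth (\<lambda>p. g (fst p) (snd p))"

definition dderiv :: "'a \<times> 'b \<Rightarrow> ('a::real_normed_vector \<Rightarrow> 'b::real_normed_vector \<Rightarrow> 'c::real_normed_vector)
    \<Rightarrow> 'a \<Rightarrow> 'b \<Rightarrow> 'c"
  where "dderiv v g x u = frechet_derivative (\<lambda>p. g (fst p) (snd p)) (at (x, u)) v"

abbreviation xdir :: "'n::finite \<Rightarrow> (real, 'n) vec \<times> (real, 'n) vec"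
  where "xdir i \<equiv> (axis i 1, 0)"

abbreviation udir :: "'n::finite \<Rightarrow> (real, 'n) vec \<times> (real, 'n) vec"
  where "udir i \<equiv> (0, axis i 1)"

lemma vector_derivative_line_eq_frechet_derivative:
  assumes "G differentiable (at p)"
  shows "vector_derivative (\<lambda>t. G (p + t *\<^sub>R v)) (at 0) = frechet_derivative G (at p) v"
proof -
  have G': "(G has_derivative frechet_derivative G (at p)) (at p)"
    using assms frechet_derivative_works by blast
  have "((\<lambda>t::real. p + t *\<^sub>R v) has_derivative (\<lambda>t. t *\<^sub>R v)) (at 0)"
    by (auto intro!: derivative_eq_intros)
  from has_derivative_compose[OF this, of G] G'
  have "((\<lambda>t. G (p + t *\<^sub>R v)) has_derivative (\<lambda>t. frechet_derivative G (at p) (t *\<^sub>R v))) (at 0)"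
    by simp
  then have "((\<lambda>t. G (p + t *\<^sub>R v)) has_derivative (\<lambda>t. t *\<^sub>R frechet_derivative G (at p) v)) (at 0)"
    using linear_scale[OF has_derivative_linear[OF G']] by simp
  then show ?thesis
    unfolding has_vector_derivative_def[symmetric] by (rule vector_derivative_at)
qed

lemma vector_derivative_eq_dderiv:
  assumes "smooth2 g"
  shows "vector_derivative (\<lambda>t. g (x + t *\<^sub>R fst v) (u + t *\<^sub>R snd v)) (at 0) = dderiv v g x u"
  using vector_derivative_line_eq_frechet_derivative[OF smooth_differentiable, of "\<lambda>p. g (fst p) (snd p)" "(x, u)" v]
    assms unfolding smooth2_def dderiv_def by simp

lemma dx_eq_dderiv: "smooth2 g \<Longrightarrow> dx i g = dderiv (xdir i) g"
proof (intro ext)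
  fix x u assume "smooth2 g"
  from vector_derivative_eq_dderiv[OF this, where x = x and u = u and v = "xdir i"]
  show "dx i g x u = dderiv (xdir i) g x u" by (simp add: dx_def pd_def)
qed

lemma du_eq_dderiv: "smooth2 g \<Longrightarrow> du i g = dderiv (udir i) g"
proof (intro ext)
  fix x u assume "smooth2 g"
  from vector_derivative_eq_dderiv[OF this, where x = x and u = u and v = "udir i"]
  show "du i g x u = dderiv (udir i) g x u" by (simp add: du_def pd_def)
qed

lemma smooth2_dderiv [simp]: "smooth2 g \<Longrightarrow> smooth2 (dderiv v g)"
  unfolding smooth2_def dderiv_def by (simp add: smooth_frechet_derivative)

lemma dderiv_commute:
  fixes g :: "'a::real_normed_vector \<Rightarrow> 'b::real_normed_vector \<Rightarrow> 'c::real_inner"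
  shows "smooth2 g \<Longrightarrow> dderiv v (dderiv w g) = dderiv w (dderiv v g)"
  unfolding smooth2_def dderiv_def
  using smooth_frechet_derivative_commute[of "\<lambda>p. g (fst p) (snd p)"] by simp

lemma smooth2_add [simp]: "smooth2 g \<Longrightarrow> smooth2 h \<Longrightarrow> smooth2 (\<lambda>x u. g x u + h x u)"
  unfolding smooth2_def by (simp add: smooth_add)

lemma smooth2_bounded_linear: "bounded_linear L \<Longrightarrow> smooth2 g \<Longrightarrow> smooth2 (\<lambda>x u. L (g x u))"
  unfolding smooth2_def by (rule smooth_bounded_linear_compose[where G = "\<lambda>p. g (fst p) (snd p)"])

lemma smooth2_zero [simp]: "smooth2 (\<lambda>x u. 0)"
  unfolding smooth2_def by (simp add: smooth_const)

lemma smooth2_sum [simp]: "(\<And>i. smooth2 (g i)) \<Longrightarrow> smooth2 (\<lambda>x u. \<Sum>i\<in>S. g i x u)"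
  by (induction S rule: infinite_finite_induct) simp_all

lemma smooth2_scaleR_component [simp]:
  "smooth2 g \<Longrightarrow> smooth2 (\<lambda>x (u::(real, 'n::finite) vec). (u $ j) *\<^sub>R g x u)"
  unfolding smooth2_def
  using smooth_scaleR_bounded_linear[of "\<lambda>p. snd p $ j" "\<lambda>p. g (fst p) (snd p)"]
  by (simp add: bounded_linear_compose[OF bounded_linear_vec_nth bounded_linear_snd])

lemma smooth2_scaleR [simp]: "smooth2 g \<Longrightarrow> smooth2 (\<lambda>x u. c *\<^sub>R g x u)"
  by (rule smooth2_bounded_linear[OF bounded_linear_scaleR_right])

lemma smooth2_minus [simp]: "smooth2 g \<Longrightarrow> smooth2 (\<lambda>x u. - g x u)"
  by (rule smooth2_bounded_linear[OF bounded_linear_minus[OF bounded_linear_ident]])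

lemma smooth2_diff [simp]: "smooth2 g \<Longrightarrow> smooth2 h \<Longrightarrow> smooth2 (\<lambda>x u. g x u - h x u)"
  using smooth2_add[of g "\<lambda>x u. - h x u"] by simp

lemma smooth2_cl_mult [simp]: "smooth2 g \<Longrightarrow> smooth2 (\<lambda>x u. a \<odot> g x u)"
  by (rule smooth2_bounded_linear[OF cl_mult.bounded_linear_right])

lemma dderiv_has_derivative_eq:
  assumes "((\<lambda>p. g (fst p) (snd p)) has_derivative D) (at (x, u))" shows "dderiv v g x u = D v"
  using assms unfolding dderiv_def by (rule frechet_derivative_eq)

lemma dderiv_add:
  "smooth2 g \<Longrightarrow> smooth2 h \<Longrightarrow> dderiv v (\<lambda>x u. g x u + h x u) = (\<lambda>x u. dderiv v g x u + dderiv v h x u)"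
  unfolding smooth2_def dderiv_def
  by (intro ext frechet_derivative_eq has_derivative_add[OF smooth_has_derivative smooth_has_derivative])

lemma dderiv_bounded_linear:
  "bounded_linear L \<Longrightarrow> smooth2 g \<Longrightarrow> dderiv v (\<lambda>x u. L (g x u)) = (\<lambda>x u. L (dderiv v g x u))"
  unfolding smooth2_def dderiv_def
  by (intro ext frechet_derivative_eq bounded_linear.has_derivative[OF _ smooth_has_derivative])

lemma dderiv_scaleR_component:
  fixes g :: "'a::real_normed_vector \<Rightarrow> (real, 'n::finite) vec \<Rightarrow> 'c::real_normed_vector"
  assumes "smooth2 g"
  shows "dderiv v (\<lambda>x u. (u $ j) *\<^sub>R g x u) = (\<lambda>x u. (snd v $ j) *\<^sub>R g x u + (u $ j) *\<^sub>R dderiv v g x u)"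
proof (intro ext dderiv_has_derivative_eq)
  fix x :: 'a and u :: "(real, 'n) vec"
  have "((\<lambda>p. snd p $ j) has_derivative (\<lambda>p. snd p $ j)) (at (x, u))"
    by (intro bounded_linear.has_derivative[OF _ has_derivative_ident]
        bounded_linear_compose[OF bounded_linear_vec_nth bounded_linear_snd])
  from has_derivative_scaleR[OF this smooth_has_derivative[OF assms[unfolded smooth2_def], of "(x, u)"]]
  show "((\<lambda>p. (snd p $ j) *\<^sub>R g (fst p) (snd p)) has_derivative
      (\<lambda>v. (snd v $ j) *\<^sub>R g x u + (u $ j) *\<^sub>R dderiv v g x u)) (at (x, u))"
    unfolding dderiv_def by (simp add: add.commute)
qed

lemma dderiv_scaleR: "smooth2 g \<Longrightarrow> dderiv v (\<lambda>x u. c *\<^sub>R g x u) = (\<lambda>x u. c *\<^sub>R dderiv v g x u)"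
  by (rule dderiv_bounded_linear[OF bounded_linear_scaleR_right])

lemma dderiv_cl_mult: "smooth2 g \<Longrightarrow> dderiv v (\<lambda>x u. a \<odot> g x u) = (\<lambda>x u. a \<odot> dderiv v g x u)"
  by (rule dderiv_bounded_linear[OF cl_mult.bounded_linear_right])

definition Umul :: "('n::{finite,linorder}) clfun \<Rightarrow> 'n clfun" where
  "Umul g = (\<lambda>x u. cl_vec u \<odot> g x u)"

definition Eu :: "('n::{finite,linorder}) clfun \<Rightarrow> 'n clfun" where
  "Eu g = (\<lambda>x u. \<Sum>i\<in>UNIV. (u $ i) *\<^sub>R du i g x u)"

definition Lapu :: "('n::{finite,linorder}) clfun \<Rightarrow> 'n clfun" where
  "Lapu g = (\<lambda>x u. \<Sum>i\<in>UNIV. du i (du i g) x u)"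

lemma Umul_apply: "Umul g x u = cl_vec u \<odot> g x u"
  unfolding Umul_def ..

lemma Umul_eq: "Umul g = (\<lambda>x u. \<Sum>i\<in>UNIV. (u $ i) *\<^sub>R (cl_e i \<odot> g x u))"
  unfolding Umul_def cl_vec_mult ..

lemma Dx_eq: "smooth2 g \<Longrightarrow> Dx g = (\<lambda>x u. \<Sum>i\<in>UNIV. cl_e i \<odot> dderiv (xdir i) g x u)"
  unfolding Dx_def by (simp add: dx_eq_dderiv)

lemma Du_eq: "smooth2 g \<Longrightarrow> Du g = (\<lambda>x u. \<Sum>i\<in>UNIV. cl_e i \<odot> dderiv (udir i) g x u)"
  unfolding Du_def by (simp add: du_eq_dderiv)

lemma uDx_eq: "smooth2 g \<Longrightarrow> uDx g = (\<lambda>x u. \<Sum>i\<in>UNIV. (u $ i) *\<^sub>R dderiv (xdir i) g x u)"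
  unfolding uDx_def by (simp add: dx_eq_dderiv)

lemma DuDx_eq: "smooth2 g \<Longrightarrow> DuDx g = (\<lambda>x u. \<Sum>i\<in>UNIV. dderiv (udir i) (dderiv (xdir i) g) x u)"
  unfolding DuDx_def by (simp add: dx_eq_dderiv du_eq_dderiv)

lemma Eu_eq: "smooth2 g \<Longrightarrow> Eu g = (\<lambda>x u. \<Sum>i\<in>UNIV. (u $ i) *\<^sub>R dderiv (udir i) g x u)"
  unfolding Eu_def by (simp add: du_eq_dderiv)

lemma Lapu_eq: "smooth2 g \<Longrightarrow> Lapu g = (\<lambda>x u. \<Sum>i\<in>UNIV. dderiv (udir i) (dderiv (udir i) g) x u)"
  unfolding Lapu_def by (simp add: du_eq_dderiv)

lemma Lapx_eq: "smooth2 g \<Longrightarrow> Lapx g = (\<lambda>x u. \<Sum>i\<in>UNIV. dderiv (xdir i) (dderiv (xdir i) g) x u)"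
  unfolding Lapx_def by (simp add: dx_eq_dderiv)

definition smooth_linear_op :: "('n::{finite,linorder} clfun \<Rightarrow> 'n clfun) \<Rightarrow> bool" where
  "smooth_linear_op Op \<longleftrightarrow> (\<forall>g. smooth2 g \<longrightarrow> smooth2 (Op g))
     \<and> (\<forall>g h. smooth2 g \<longrightarrow> smooth2 h \<longrightarrow> Op (\<lambda>x u. g x u + h x u) = (\<lambda>x u. Op g x u + Op h x u))
     \<and> (\<forall>c g. smooth2 g \<longrightarrow> Op (\<lambda>x u. c *\<^sub>R g x u) = (\<lambda>x u. c *\<^sub>R Op g x u))"

context
  fixes Op :: "'n::{finite,linorder} clfun \<Rightarrow> 'n clfun"
  assumes Op: "smooth_linear_op Op"
begin

lemma smooth_linear_op_smooth2: "smooth2 g \<Longrightarrow> smooth2 (Op g)"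
  using Op unfolding smooth_linear_op_def by blast

lemma smooth_linear_op_add:
  "smooth2 g \<Longrightarrow> smooth2 h \<Longrightarrow> Op (\<lambda>x u. g x u + h x u) = (\<lambda>x u. Op g x u + Op h x u)"
  using Op unfolding smooth_linear_op_def by blast

lemma smooth_linear_op_scaleR: "smooth2 g \<Longrightarrow> Op (\<lambda>x u. c *\<^sub>R g x u) = (\<lambda>x u. c *\<^sub>R Op g x u)"
  using Op unfolding smooth_linear_op_def by blast

lemma smooth_linear_op_minus: "smooth2 g \<Longrightarrow> Op (\<lambda>x u. - g x u) = (\<lambda>x u. - Op g x u)"
  using smooth_linear_op_scaleR[of g "-1"] by simp

lemma smooth_linear_op_diff:
  "smooth2 g \<Longrightarrow> smooth2 h \<Longrightarrow> Op (\<lambda>x u. g x u - h x u) = (\<lambda>x u. Op g x u - Op h x u)"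
  using smooth_linear_op_add[of g "\<lambda>x u. - h x u"] smooth_linear_op_minus[of h] by simp

lemma smooth_linear_op_zero: "Op (\<lambda>x u. 0) = (\<lambda>x u. 0)"
  using smooth_linear_op_scaleR[OF smooth2_zero, of 0] by simp

lemma smooth_linear_op_sum:
  "(\<And>i. smooth2 (g i)) \<Longrightarrow> Op (\<lambda>x u. \<Sum>i\<in>S. g i x u) = (\<lambda>x u. \<Sum>i\<in>S. Op (g i) x u)"
proof (induction S rule: infinite_finite_induct)
  case (insert a F)
  then show ?case using smooth_linear_op_add[of "g a" "\<lambda>x u. \<Sum>i\<in>F. g i x u"] by simp
qed (simp_all add: smooth_linear_op_zero)

end

lemmas smooth_linear_op_simps = smooth_linear_op_smooth2 smooth_linear_op_add smooth_linear_op_scaleR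
  smooth_linear_op_minus smooth_linear_op_diff smooth_linear_op_zero

lemma smooth_linear_opI:
  assumes "\<And>g. smooth2 g \<Longrightarrow> smooth2 (Op g)"
    and "\<And>g h. smooth2 g \<Longrightarrow> smooth2 h \<Longrightarrow> Op (\<lambda>x u. g x u + h x u) = (\<lambda>x u. Op g x u + Op h x u)"
    and "\<And>c g. smooth2 g \<Longrightarrow> Op (\<lambda>x u. c *\<^sub>R g x u) = (\<lambda>x u. c *\<^sub>R Op g x u)"
  shows "smooth_linear_op Op"
  using assms unfolding smooth_linear_op_def by blast

lemma smooth_linear_op_dderiv: "smooth_linear_op (dderiv v)"
  by (rule smooth_linear_opI) (simp_all add: dderiv_add dderiv_scaleR)

lemmas dderiv_simps [simp] = smooth_linear_op_simps[OF smooth_linear_op_dderiv]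
lemmas dderiv_sum [simp] = smooth_linear_op_sum[OF smooth_linear_op_dderiv]

lemma smooth_linear_op_Umul: "smooth_linear_op Umul"
  by (rule smooth_linear_opI)
    (simp_all add: Umul_eq cl_mult.add_right cl_mult.scaleR_right scaleR_sum_right sum.distrib
      algebra_simps)

lemma smooth_linear_op_Dx: "smooth_linear_op Dx"
  by (rule smooth_linear_opI)
    (simp_all add: Dx_eq cl_mult.add_right cl_mult.scaleR_right scaleR_sum_right sum.distrib)

lemma smooth_linear_op_Du: "smooth_linear_op Du"
  by (rule smooth_linear_opI)
    (simp_all add: Du_eq cl_mult.add_right cl_mult.scaleR_right scaleR_sum_right sum.distrib)

lemma smooth_linear_op_uDx: "smooth_linear_op uDx"
  by (rule smooth_linear_opI) (simp_all add: uDx_eq scaleR_sum_right sum.distrib algebra_simps)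

lemma smooth_linear_op_DuDx: "smooth_linear_op DuDx"
  by (rule smooth_linear_opI) (simp_all add: DuDx_eq scaleR_sum_right sum.distrib)

lemma smooth_linear_op_Eu: "smooth_linear_op Eu"
  by (rule smooth_linear_opI) (simp_all add: Eu_eq scaleR_sum_right sum.distrib algebra_simps)

lemma smooth_linear_op_Lapu: "smooth_linear_op Lapu"
  by (rule smooth_linear_opI) (simp_all add: Lapu_eq scaleR_sum_right sum.distrib)

lemmas Umul_simps [simp] = smooth_linear_op_simps[OF smooth_linear_op_Umul]
lemmas Umul_sum = smooth_linear_op_sum[OF smooth_linear_op_Umul]
lemmas Dx_simps [simp] = smooth_linear_op_simps[OF smooth_linear_op_Dx]
lemmas Dx_sum = smooth_linear_op_sum[OF smooth_linear_op_Dx]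
lemmas Du_simps [simp] = smooth_linear_op_simps[OF smooth_linear_op_Du]
lemmas Du_sum = smooth_linear_op_sum[OF smooth_linear_op_Du]
lemmas uDx_simps [simp] = smooth_linear_op_simps[OF smooth_linear_op_uDx]
lemmas uDx_sum = smooth_linear_op_sum[OF smooth_linear_op_uDx]
lemmas DuDx_simps [simp] = smooth_linear_op_simps[OF smooth_linear_op_DuDx]
lemmas DuDx_sum = smooth_linear_op_sum[OF smooth_linear_op_DuDx]
lemmas Eu_simps [simp] = smooth_linear_op_simps[OF smooth_linear_op_Eu]
lemmas Eu_sum = smooth_linear_op_sum[OF smooth_linear_op_Eu]
lemmas Lapu_simps [simp] = smooth_linear_op_simps[OF smooth_linear_op_Lapu]

lemma smooth_linear_op_Lapx: "smooth_linear_op Lapx"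
  by (rule smooth_linear_opI) (simp_all add: Lapx_eq scaleR_sum_right sum.distrib)

lemmas Lapx_simps [simp] = smooth_linear_op_simps[OF smooth_linear_op_Lapx]

section \<open>Commutation relations\<close>

lemma sum_axis_scaleR:
  fixes t :: "'n::finite \<Rightarrow> 'a::real_vector"
  shows "(\<Sum>i\<in>UNIV. (axis j (1::real) $ i) *\<^sub>R t i) = t j"
proof -
  have "(\<Sum>i\<in>UNIV. (axis j (1::real) $ i) *\<^sub>R t i) = (\<Sum>i\<in>UNIV. if i = j then t i else 0)"
    by (rule sum.cong) (auto simp: axis_def)
  then show ?thesis by simp
qed

lemma dderiv_Umul:
  "smooth2 g \<Longrightarrow> dderiv v (Umul g) = (\<lambda>x u. (\<Sum>i\<in>UNIV. (snd v $ i) *\<^sub>R (cl_e i \<odot> g x u)) + Umul (dderiv v g) x u)"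
  unfolding Umul_eq by (simp add: dderiv_scaleR_component dderiv_cl_mult sum.distrib)

lemma dderiv_uDx:
  "smooth2 g \<Longrightarrow> dderiv v (uDx g) = (\<lambda>x u. (\<Sum>i\<in>UNIV. (snd v $ i) *\<^sub>R dderiv (xdir i) g x u) + uDx (dderiv v g) x u)"
  by (simp add: uDx_eq dderiv_scaleR_component sum.distrib dderiv_commute)

lemma dderiv_Eu:
  "smooth2 g \<Longrightarrow> dderiv v (Eu g) = (\<lambda>x u. (\<Sum>i\<in>UNIV. (snd v $ i) *\<^sub>R dderiv (udir i) g x u) + Eu (dderiv v g) x u)"
  by (simp add: Eu_eq dderiv_scaleR_component sum.distrib dderiv_commute)

lemma dderiv_xdir_Umul [simp]: "smooth2 g \<Longrightarrow> dderiv (xdir j) (Umul g) = Umul (dderiv (xdir j) g)"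
  by (simp add: dderiv_Umul)

lemma dderiv_udir_Umul [simp]:
  "smooth2 g \<Longrightarrow> dderiv (udir j) (Umul g) = (\<lambda>x u. cl_e j \<odot> g x u + Umul (dderiv (udir j) g) x u)"
  by (simp add: dderiv_Umul sum_axis_scaleR)

lemma dderiv_xdir_uDx [simp]: "smooth2 g \<Longrightarrow> dderiv (xdir j) (uDx g) = uDx (dderiv (xdir j) g)"
  by (simp add: dderiv_uDx)

lemma dderiv_udir_uDx [simp]:
  "smooth2 g \<Longrightarrow> dderiv (udir j) (uDx g) = (\<lambda>x u. dderiv (xdir j) g x u + uDx (dderiv (udir j) g) x u)"
  by (simp add: dderiv_uDx sum_axis_scaleR)

lemma dderiv_xdir_Eu [simp]: "smooth2 g \<Longrightarrow> dderiv (xdir j) (Eu g) = Eu (dderiv (xdir j) g)"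
  by (simp add: dderiv_Eu)

lemma dderiv_udir_Eu [simp]:
  "smooth2 g \<Longrightarrow> dderiv (udir j) (Eu g) = (\<lambda>x u. dderiv (udir j) g x u + Eu (dderiv (udir j) g) x u)"
  by (simp add: dderiv_Eu sum_axis_scaleR)

lemma dderiv_Dx [simp]: "smooth2 g \<Longrightarrow> dderiv v (Dx g) = Dx (dderiv v g)"
  by (simp add: Dx_eq dderiv_cl_mult dderiv_commute)

lemma dderiv_Du [simp]: "smooth2 g \<Longrightarrow> dderiv v (Du g) = Du (dderiv v g)"
  by (simp add: Du_eq dderiv_cl_mult dderiv_commute)

lemma dderiv_DuDx [simp]: "smooth2 g \<Longrightarrow> dderiv v (DuDx g) = DuDx (dderiv v g)"
  by (simp add: DuDx_eq dderiv_commute)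

text \<open>Read left to right they push \<open>D\<^sub>u\<close>, \<open>\<langle>D\<^sub>u,D\<^sub>x\<rangle>\<close>,
  the Euler operator and the Laplacian in \<open>u\<close> to the right of \<open>u\<close>, \<open>\<langle>u,D\<^sub>x\<rangle>\<close> and \<open>D\<^sub>x\<close>, so that together
  with linearity they bring every composite expression into a normal form.\<close>

lemma Du_Umul:
  fixes g :: "('n::{finite,linorder}) clfun"
  assumes g: "smooth2 g"
  shows "Du (Umul g) = (\<lambda>x u. - Umul (Du g) x u - 2 *\<^sub>R Eu g x u - real CARD('n) *\<^sub>R g x u)"
proof (intro ext)
  fix x u
  have "Du (Umul g) x u = (\<Sum>i\<in>UNIV. cl_e i \<odot> (cl_e i \<odot> g x u)) + (\<Sum>i\<in>UNIV. cl_e i \<odot> Umul (dderiv (udir i) g) x u)"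
    using g by (simp add: Du_eq cl_mult.add_right sum.distrib)
  moreover have "(\<Sum>i\<in>UNIV. cl_e i \<odot> Umul (dderiv (udir i) g) x u) + Umul (Du g) x u = (-2) *\<^sub>R Eu g x u"
    using g cl_vec_anticommutator[where k = "\<lambda>i. dderiv (udir i) g x u" and u = u]
    by (simp add: Umul_apply Du_eq Eu_eq)
  moreover have "(\<Sum>i\<in>UNIV. cl_e i \<odot> (cl_e i \<odot> g x u)) = - (real CARD('n) *\<^sub>R g x u)"
    by (simp add: cl_e_mult_cl_e_mult_self scaleR_conv_of_real)
  ultimately show "Du (Umul g) x u = - Umul (Du g) x u - 2 *\<^sub>R Eu g x u - real CARD('n) *\<^sub>R g x u"
    by (simp add: eq_diff_eq[symmetric])
qed

lemma Dx_Umul: "smooth2 g \<Longrightarrow> Dx (Umul g) = (\<lambda>x u. - Umul (Dx g) x u - 2 *\<^sub>R uDx g x u)"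
proof (intro ext)
  fix x u assume "smooth2 g"
  then have "Dx (Umul g) x u + Umul (Dx g) x u = (-2) *\<^sub>R uDx g x u"
    using cl_vec_anticommutator[where k = "\<lambda>i. dderiv (xdir i) g x u" and u = u]
    by (simp add: Umul_apply Dx_eq uDx_eq)
  then show "Dx (Umul g) x u = - Umul (Dx g) x u - 2 *\<^sub>R uDx g x u"
    by (simp add: eq_diff_eq[symmetric])
qed

lemma uDx_cl_mult [simp]: "smooth2 g \<Longrightarrow> uDx (\<lambda>x u. a \<odot> g x u) = (\<lambda>x u. a \<odot> uDx g x u)"
  by (simp add: uDx_eq dderiv_cl_mult cl_mult.sum_right cl_mult.scaleR_right)

lemma DuDx_cl_mult [simp]: "smooth2 g \<Longrightarrow> DuDx (\<lambda>x u. a \<odot> g x u) = (\<lambda>x u. a \<odot> DuDx g x u)"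
  by (simp add: DuDx_eq dderiv_cl_mult cl_mult.sum_right)

lemma Eu_cl_mult [simp]: "smooth2 g \<Longrightarrow> Eu (\<lambda>x u. a \<odot> g x u) = (\<lambda>x u. a \<odot> Eu g x u)"
  by (simp add: Eu_eq dderiv_cl_mult cl_mult.sum_right cl_mult.scaleR_right)

lemma Lapu_cl_mult [simp]: "smooth2 g \<Longrightarrow> Lapu (\<lambda>x u. a \<odot> g x u) = (\<lambda>x u. a \<odot> Lapu g x u)"
  by (simp add: Lapu_eq dderiv_cl_mult cl_mult.sum_right)

lemma Du_uDx: "smooth2 g \<Longrightarrow> Du (uDx g) = (\<lambda>x u. uDx (Du g) x u + Dx g x u)"
  by (intro ext) (simp add: Du_eq[of g] Du_eq[of "uDx g"] Dx_eq uDx_sum cl_mult.add_right sum.distrib add.commute)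

lemma Du_Dx: "smooth2 g \<Longrightarrow> Du (Dx g) = (\<lambda>x u. - Dx (Du g) x u - 2 *\<^sub>R DuDx g x u)"
proof (intro ext)
  fix x u assume "smooth2 g"
  then have "Du (Dx g) x u + Dx (Du g) x u = (-2) *\<^sub>R DuDx g x u"
    using cl_e_double_sum_anticommutator[of "\<lambda>i j. dderiv (udir i) (dderiv (xdir j) g) x u"]
    by (simp add: Du_eq Dx_eq DuDx_eq dderiv_commute dderiv_cl_mult)
  then show "Du (Dx g) x u = - Dx (Du g) x u - 2 *\<^sub>R DuDx g x u"
    by (simp add: eq_diff_eq[symmetric])
qed

lemma Du_DuDx: "smooth2 g \<Longrightarrow> Du (DuDx g) = DuDx (Du g)"
  by (simp add: Du_eq[of "DuDx g"] Du_eq[of g] DuDx_sum)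

lemma Du_Du: "smooth2 g \<Longrightarrow> Du (Du g) = (\<lambda>x u. - Lapu g x u)"
proof (intro ext)
  fix x u assume g: "smooth2 g"
  have "dderiv (udir i) (dderiv (udir j) g) x u = dderiv (udir j) (dderiv (udir i) g) x u" for i j
    using g by (simp add: dderiv_commute)
  from cl_e_double_sum_symmetric[of "\<lambda>i j. dderiv (udir i) (dderiv (udir j) g) x u", OF this] g
  show "Du (Du g) x u = - Lapu g x u"
    by (simp add: Du_eq Lapu_eq dderiv_cl_mult)
qed

lemma Dx_Dx: "smooth2 g \<Longrightarrow> Dx (Dx g) = (\<lambda>x u. - Lapx g x u)"
proof (intro ext)
  fix x u assume g: "smooth2 g"
  have "dderiv (xdir i) (dderiv (xdir j) g) x u = dderiv (xdir j) (dderiv (xdir i) g) x u" for i j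
    using g by (simp add: dderiv_commute)
  from cl_e_double_sum_symmetric[of "\<lambda>i j. dderiv (xdir i) (dderiv (xdir j) g) x u", OF this] g
  show "Dx (Dx g) x u = - Lapx g x u"
    by (simp add: Dx_eq Lapx_eq dderiv_cl_mult)
qed

lemma DuDx_Umul: "smooth2 g \<Longrightarrow> DuDx (Umul g) = (\<lambda>x u. Umul (DuDx g) x u + Dx g x u)"
  by (simp add: DuDx_eq Dx_eq Umul_sum sum.distrib add.commute)

lemma DuDx_uDx: "smooth2 g \<Longrightarrow> DuDx (uDx g) = (\<lambda>x u. uDx (DuDx g) x u - Dx (Dx g) x u)"
  by (simp add: Dx_Dx DuDx_eq Lapx_eq uDx_sum sum.distrib add.commute)

lemma DuDx_Dx: "smooth2 g \<Longrightarrow> DuDx (Dx g) = Dx (DuDx g)"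
  by (simp add: DuDx_eq[of "Dx g"] DuDx_eq[of g] Dx_sum)

lemma Dx_uDx: "smooth2 g \<Longrightarrow> Dx (uDx g) = uDx (Dx g)"
  by (simp add: Dx_eq[of "uDx g"] Dx_eq[of g] uDx_sum)

lemma uDx_Umul: "smooth2 g \<Longrightarrow> uDx (Umul g) = Umul (uDx g)"
  by (intro ext) (simp add: uDx_eq Umul_apply cl_mult.sum_right cl_mult.scaleR_right)

lemma Eu_Umul: "smooth2 g \<Longrightarrow> Eu (Umul g) = (\<lambda>x u. Umul (Eu g) x u + Umul g x u)"
proof (intro ext)
  fix x u assume g: "smooth2 g"
  have "Eu (Umul g) x u = (\<Sum>i\<in>UNIV. (u $ i) *\<^sub>R (cl_e i \<odot> g x u))
      + (\<Sum>i\<in>UNIV. (u $ i) *\<^sub>R Umul (dderiv (udir i) g) x u)"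
    using g by (simp add: Eu_eq scaleR_add_right sum.distrib)
  also have "\<dots> = Umul g x u + Umul (Eu g) x u"
    using g by (simp add: Eu_eq Umul_apply cl_vec_mult cl_mult.sum_right cl_mult.scaleR_right)
  finally show "Eu (Umul g) x u = Umul (Eu g) x u + Umul g x u" by simp
qed

lemma Eu_uDx: "smooth2 g \<Longrightarrow> Eu (uDx g) = (\<lambda>x u. uDx (Eu g) x u + uDx g x u)"
proof (intro ext)
  fix x u assume g: "smooth2 g"
  have "uDx (Eu g) x u = (\<Sum>i\<in>UNIV. \<Sum>j\<in>UNIV. (u $ i * u $ j) *\<^sub>R dderiv (xdir i) (dderiv (udir j) g) x u)"
    using g by (simp add: Eu_eq[of g] uDx_eq dderiv_scaleR_component scaleR_sum_right)
  also have "\<dots> = (\<Sum>j\<in>UNIV. (u $ j) *\<^sub>R uDx (dderiv (udir j) g) x u)"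
    using g by (subst sum.swap) (simp add: uDx_eq scaleR_sum_right mult.commute)
  moreover have "Eu (uDx g) x u = (\<Sum>j\<in>UNIV. (u $ j) *\<^sub>R dderiv (xdir j) g x u)
      + (\<Sum>j\<in>UNIV. (u $ j) *\<^sub>R uDx (dderiv (udir j) g) x u)"
    using g by (simp add: Eu_eq[of "uDx g"] scaleR_add_right sum.distrib)
  moreover have "(\<Sum>j\<in>UNIV. (u $ j) *\<^sub>R dderiv (xdir j) g x u) = uDx g x u"
    using g by (simp add: uDx_eq)
  ultimately show "Eu (uDx g) x u = uDx (Eu g) x u + uDx g x u"
    by simp
qed

lemma Eu_Dx: "smooth2 g \<Longrightarrow> Eu (Dx g) = Dx (Eu g)"
proof (intro ext)
  fix x u assume g: "smooth2 g"
  have "Dx (Eu g) x u = (\<Sum>i\<in>UNIV. \<Sum>j\<in>UNIV. (u $ j) *\<^sub>R (cl_e i \<odot> dderiv (xdir i) (dderiv (udir j) g) x u))"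
    using g by (simp add: Eu_eq[of g] Dx_eq dderiv_scaleR_component cl_mult.sum_right cl_mult.scaleR_right)
  also have "\<dots> = Eu (Dx g) x u"
    using g by (subst sum.swap) (simp add: Eu_eq[of "Dx g"] Dx_eq[of "dderiv _ g"] scaleR_sum_right dderiv_commute)
  finally show "Eu (Dx g) x u = Dx (Eu g) x u" ..
qed

lemma Eu_DuDx: "smooth2 g \<Longrightarrow> Eu (DuDx g) = (\<lambda>x u. DuDx (Eu g) x u - DuDx g x u)"
  by (simp add: DuDx_eq[of "Eu g"] DuDx_eq[of g] Eu_sum sum.distrib)

lemma Eu_Du: "smooth2 g \<Longrightarrow> Eu (Du g) = (\<lambda>x u. Du (Eu g) x u - Du g x u)"
  by (simp add: Du_eq[of "Eu g"] Du_eq[of g] Eu_sum cl_mult.add_right sum.distrib)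

lemma Lapu_Dx: "smooth2 g \<Longrightarrow> Lapu (Dx g) = Dx (Lapu g)"
  by (simp add: Lapu_eq[of "Dx g"] Lapu_eq[of g] Dx_sum)

lemma Lapu_DuDx: "smooth2 g \<Longrightarrow> Lapu (DuDx g) = DuDx (Lapu g)"
  by (simp add: Lapu_eq[of "DuDx g"] Lapu_eq[of g] DuDx_sum)

lemma Lapu_Du: "smooth2 g \<Longrightarrow> Lapu (Du g) = Du (Lapu g)"
  by (simp add: Lapu_eq[of "Du g"] Lapu_eq[of g] Du_sum)

lemma Lapu_Umul: "smooth2 g \<Longrightarrow> Lapu (Umul g) = (\<lambda>x u. Umul (Lapu g) x u + 2 *\<^sub>R Du g x u)"
proof (intro ext)
  fix x u assume g: "smooth2 g"
  have "Lapu (Umul g) x u = 2 *\<^sub>R (\<Sum>i\<in>UNIV. cl_e i \<odot> dderiv (udir i) g x u)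
      + (\<Sum>i\<in>UNIV. Umul (dderiv (udir i) (dderiv (udir i) g)) x u)"
    using g by (simp add: Lapu_eq[of "Umul g"] dderiv_cl_mult sum.distrib scaleR_2 sum_distrib_left)
  then show "Lapu (Umul g) x u = Umul (Lapu g) x u + 2 *\<^sub>R Du g x u"
    using g by (simp add: Lapu_eq[of g] Du_eq Umul_sum sum_distrib_left)
qed

lemma Lapu_uDx: "smooth2 g \<Longrightarrow> Lapu (uDx g) = (\<lambda>x u. uDx (Lapu g) x u + 2 *\<^sub>R DuDx g x u)"
proof (intro ext)
  fix x u assume g: "smooth2 g"
  have "Lapu (uDx g) x u = 2 *\<^sub>R (\<Sum>i\<in>UNIV. dderiv (udir i) (dderiv (xdir i) g) x u)
      + (\<Sum>i\<in>UNIV. uDx (dderiv (udir i) (dderiv (udir i) g)) x u)"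
    using g by (simp add: Lapu_eq[of "uDx g"] sum.distrib scaleR_2 dderiv_commute sum_distrib_left)
  then show "Lapu (uDx g) x u = uDx (Lapu g) x u + 2 *\<^sub>R DuDx g x u"
    using g by (simp add: Lapu_eq[of g] DuDx_eq uDx_sum sum_distrib_left)
qed

lemma Umul_Umul: "Umul (Umul g) = (\<lambda>x u. - ((norm u)\<^sup>2 *\<^sub>R g x u))"
proof (intro ext)
  fix x u
  have "Umul (Umul g) x u = (\<Sum>i\<in>UNIV. \<Sum>j\<in>UNIV. (u $ i * u $ j) *\<^sub>R (cl_e j \<odot> (cl_e i \<odot> g x u)))"
    by (simp add: Umul_apply cl_vec_mult cl_mult.sum_right cl_mult.scaleR_right scaleR_sum_right)
  also have "\<dots> = (\<Sum>j\<in>UNIV. \<Sum>i\<in>UNIV. (u $ i * u $ j) *\<^sub>R (cl_e j \<odot> (cl_e i \<odot> g x u)))"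
    by (rule sum.swap)
  also have "\<dots> = (\<Sum>i\<in>UNIV. cl_e i \<odot> (\<Sum>j\<in>UNIV. cl_e j \<odot> ((u $ i * u $ j) *\<^sub>R g x u)))"
    by (simp add: cl_mult.sum_right cl_mult.scaleR_right mult.commute)
  also have "\<dots> = - (\<Sum>i\<in>UNIV. (u $ i * u $ i) *\<^sub>R g x u)"
    by (rule cl_e_double_sum_symmetric) (simp add: mult.commute)
  also have "\<dots> = - ((norm u)\<^sup>2 *\<^sub>R g x u)"
    by (simp add: power2_norm_eq_inner inner_vec_def scaleR_sum_left)
  finally show "Umul (Umul g) x u = - ((norm u)\<^sup>2 *\<^sub>R g x u)" .
qed

lemma Lapx_Umul: "smooth2 g \<Longrightarrow> Lapx (Umul g) = Umul (Lapx g)"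
  by (simp add: Lapx_eq Umul_sum)

lemma Lapx_Du: "smooth2 g \<Longrightarrow> Lapx (Du g) = Du (Lapx g)"
  by (simp add: Lapx_eq[of "Du g"] Lapx_eq[of g] Du_sum)

lemma hom_poly_scaleR:
  assumes "hom_poly k p"
  shows "p (t *\<^sub>R u) = (t ^ k) *\<^sub>R p u"
proof -
  obtain c where c: "\<And>u. p u = (\<Sum>\<alpha>\<in>{\<alpha>. (\<Sum>i\<in>UNIV. \<alpha> i) = k}. (\<Prod>i\<in>UNIV. (u $ i) ^ (\<alpha> i)) *\<^sub>R c \<alpha>)"
    using assms unfolding hom_poly_def by blast
  have "(\<Prod>i\<in>UNIV. ((t *\<^sub>R u) $ i) ^ (\<alpha> i)) = t ^ (\<Sum>i\<in>UNIV. \<alpha> i) * (\<Prod>i\<in>UNIV. (u $ i) ^ (\<alpha> i))" for \<alpha>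
    by (simp add: power_mult_distrib prod.distrib power_sum)
  then show ?thesis
    unfolding c scaleR_sum_right by (intro sum.cong) auto
qed

text \<open>Euler's identity for functions homogeneous of degree \<open>k\<close> in \<open>u\<close>: differentiate
  \<open>f(x, tu) = t\<^sup>k f(x, u)\<close> at \<open>t = 1\<close>.\<close>

lemma Eu_hom_poly:
  assumes f: "smooth2 f" and hom: "\<And>x. hom_poly k (f x)"
  shows "Eu f = (\<lambda>x u. real k *\<^sub>R f x u)"
proof (intro ext)
  fix x u
  define G where "G = (\<lambda>p. f (fst p) (snd p))"
  have G: "smooth G" using f unfolding smooth2_def G_def .
  have "Eu f x u = (\<Sum>i\<in>UNIV. (u $ i) *\<^sub>R frechet_derivative G (at (x, u)) (udir i))"
    using f by (simp add: Eu_eq dderiv_def G_def)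
  also have "\<dots> = frechet_derivative G (at (x, u)) (\<Sum>i\<in>UNIV. (u $ i) *\<^sub>R udir i)"
    using linear_frechet_derivative_smooth[OF G]
    by (simp only: linear_sum linear_scale o_def)
  also have "(\<Sum>i\<in>UNIV. (u $ i) *\<^sub>R udir i) = (0, u)"
    by (simp add: prod_eq_iff fst_sum snd_sum vec_eq_iff sum_component axis_def if_distrib cong: if_cong)
  finally have Eu_fd: "Eu f x u = frechet_derivative G (at (x, u)) (0, u)" .
  have "((\<lambda>t::real. (x, t *\<^sub>R u)) has_derivative (\<lambda>s. (0, s *\<^sub>R u))) (at 1)"
    by (auto intro!: derivative_eq_intros)
  from has_derivative_compose[OF this smooth_has_derivative[OF G, of "(x, 1 *\<^sub>R u)"]]
  have "((\<lambda>t. G (x, t *\<^sub>R u)) has_derivative (\<lambda>s. frechet_derivative G (at (x, u)) (0, s *\<^sub>R u))) (at 1)"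
    by simp
  moreover have "((\<lambda>t. G (x, t *\<^sub>R u)) has_derivative (\<lambda>s. (s * real k) *\<^sub>R f x u)) (at 1)"
  proof -
    have "(\<lambda>t. G (x, t *\<^sub>R u)) = (\<lambda>t. (t ^ k) *\<^sub>R f x u)"
      using hom_poly_scaleR[OF hom] unfolding G_def by simp
    moreover have "((\<lambda>t. (t ^ k) *\<^sub>R f x u) has_derivative (\<lambda>s. (s * real k) *\<^sub>R f x u)) (at 1)"
      by (auto intro!: derivative_eq_intros)
    ultimately show ?thesis by simp
  qed
  ultimately have "(\<lambda>s. frechet_derivative G (at (x, u)) (0, s *\<^sub>R u)) = (\<lambda>s. (s * real k) *\<^sub>R f x u)"
    by (rule has_derivative_unique)
  from fun_cong[OF this, of 1] have "frechet_derivative G (at (x, u)) (0, u) = real k *\<^sub>R f x u"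
    by simp
  then show "Eu f x u = real k *\<^sub>R f x u" using Eu_fd by simp
qed

lemma Lapu_harmonic: "(\<And>x. harmonic (f x)) \<Longrightarrow> Lapu f = (\<lambda>x u. 0)"
  unfolding Lapu_def du_def harmonic_def by simp

section \<open>The projections \<open>P\<^sup>+\<close> and \<open>P\<^sup>-\<close>\<close>

lemma Pp_eq: "Pp k g = (\<lambda>x u. g x u + (1 / (real CARD('n) + 2 * real k - 2)) *\<^sub>R Umul (Du g) x u)"
  for g :: "('n::{finite,linorder}) clfun"
  unfolding Pp_def Umul_def ..

lemma Pm_eq: "Pm k g = (\<lambda>x u. - ((1 / (real CARD('n) + 2 * real k - 2)) *\<^sub>R Umul (Du g) x u))"
  for g :: "('n::{finite,linorder}) clfun"
  unfolding Pm_def Umul_def ..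

lemma smooth_linear_op_Pp: "smooth_linear_op (Pp k)"
  by (rule smooth_linear_opI) (simp_all add: Pp_eq algebra_simps)

lemma smooth_linear_op_Pm: "smooth_linear_op (Pm k)"
  by (rule smooth_linear_opI) (simp_all add: Pm_eq algebra_simps)

lemmas Pp_simps [simp] = smooth_linear_op_simps[OF smooth_linear_op_Pp]
lemmas Pm_simps [simp] = smooth_linear_op_simps[OF smooth_linear_op_Pm]

lemma Pp_add_Pm: "(\<lambda>x u. Pp k g x u + Pm k g x u) = g"
  by (simp add: Pp_def Pm_def)

lemma Lapx_Pp: "smooth2 g \<Longrightarrow> Lapx (Pp k g) = Pp k (Lapx g)"
  by (simp add: Pp_eq Lapx_Umul Lapx_Du)

lemma Lapx_Pm: "smooth2 g \<Longrightarrow> Lapx (Pm k g) = Pm k (Lapx g)"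
  by (simp add: Pm_eq Lapx_Umul Lapx_Du)

lemma Pm_Dx_Dx: "smooth2 h \<Longrightarrow> Pm k (Dx (Dx h)) = (\<lambda>x u. Tstar k (R k h) x u + Tstar k (Tstar k h) x u)"
proof -
  assume h: "smooth2 h"
  have "Pm k (Dx (Dx h)) = Pm k (Dx (\<lambda>x u. Pp k (Dx h) x u + Pm k (Dx h) x u))"
    by (simp only: Pp_add_Pm)
  also have "\<dots> = (\<lambda>x u. Tstar k (R k h) x u + Tstar k (Tstar k h) x u)"
    using h by (simp add: R_def Tstar_def)
  finally show ?thesis .
qed

lemma Pp_Dx_Dx: "smooth2 h \<Longrightarrow> Pp k (Dx (Dx h)) = (\<lambda>x u. R k (R k h) x u + R k (Tstar k h) x u)"
proof -
  assume h: "smooth2 h"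
  have "Pp k (Dx (Dx h)) = Pp k (Dx (\<lambda>x u. Pp k (Dx h) x u + Pm k (Dx h) x u))"
    by (simp only: Pp_add_Pm)
  also have "\<dots> = (\<lambda>x u. R k (R k h) x u + R k (Tstar k h) x u)"
    using h by (simp add: R_def Tstar_def)
  finally show ?thesis .
qed

context
  fixes f :: "('n::{finite,linorder}) clfun" and k :: nat
  assumes f: "smooth2 f" and E: "Eu f = (\<lambda>x u. real k *\<^sub>R f x u)" and L: "Lapu f = (\<lambda>x u. 0)"
    and n: "real CARD('n) + 2 * real k - 2 \<noteq> 0"
begin

text \<open>\<open>P\<^sup>+ f\<close> is monogenic: \<open>D\<^sub>u(u D\<^sub>u f) = -(m + 2E\<^sub>u) D\<^sub>u f\<close> since \<open>D\<^sub>u\<^sup>2 f = -\<Delta>\<^sub>u f = 0\<close>, and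
  \<open>D\<^sub>u f\<close> is homogeneous of degree \<open>k - 1\<close>.\<close>

lemma Du_Pp_harmonic: "Du (Pp k f) = (\<lambda>x u. 0)"
proof -
  define c where "c = 1 / (real CARD('n) + 2 * real k - 2)"
  have "Eu (Du f) = (\<lambda>x u. (real k - 1) *\<^sub>R Du f x u)"
    using f by (simp add: Eu_Du E algebra_simps)
  then have "Du (Pp k f) = (\<lambda>x u. (1 - c * (real CARD('n) + 2 * real k - 2)) *\<^sub>R Du f x u)"
    using f unfolding Pp_eq c_def[symmetric] by (simp add: Du_Umul Du_Du L algebra_simps)
  also have "c * (real CARD('n) + 2 * real k - 2) = 1"
    using n by (simp add: c_def)
  finally show ?thesis by simp
qed

lemma Pm_Pp_harmonic: "Pm k (Pp k f) = (\<lambda>x u. 0)"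
  by (simp add: Pm_eq Du_Pp_harmonic)

lemma Pp_Pm_harmonic: "Pp k (Pm k f) = (\<lambda>x u. 0)"
proof -
  have "Pm k f = (\<lambda>x u. f x u - Pp k f x u)"
    by (simp add: Pp_def Pm_def)
  then have "Du (Pm k f) = Du f"
    using f by (simp add: Du_Pp_harmonic)
  then show ?thesis by (simp add: Pp_eq Pm_eq)
qed

text \<open>The two decompositions of the theorem differ by \<open>P\<^sup>\<minusplus> D\<^sub>x (P\<^sup>+ + P\<^sup>-) D\<^sub>x P\<^sup>\<plusminus> f = -\<Delta>\<^sub>x P\<^sup>\<minusplus>P\<^sup>\<plusminus> f\<close>,
  which vanishes because \<open>P\<^sup>+\<close> and \<open>P\<^sup>-\<close> are complementary projections on \<open>\<H>\<^sub>k\<close>.\<close>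

lemma Tstar_R_Pp_harmonic: "Tstar k (R k (Pp k f)) = (\<lambda>x u. - Tstar k (Tstar k (Pp k f)) x u)"
proof -
  have "(\<lambda>x u. Tstar k (R k (Pp k f)) x u + Tstar k (Tstar k (Pp k f)) x u) = (\<lambda>x u. - Lapx (Pm k (Pp k f)) x u)"
    using f by (simp add: Pm_Dx_Dx[symmetric] Dx_Dx Lapx_Pm)
  also have "\<dots> = (\<lambda>x u. 0)"
    using Pm_Pp_harmonic by simp
  finally show ?thesis
    by (simp add: fun_eq_iff eq_neg_iff_add_eq_0)
qed

lemma R_Tstar_Pm_harmonic: "R k (Tstar k (Pm k f)) = (\<lambda>x u. - R k (R k (Pm k f)) x u)"
proof -
  have "(\<lambda>x u. R k (R k (Pm k f)) x u + R k (Tstar k (Pm k f)) x u) = (\<lambda>x u. - Lapx (Pp k (Pm k f)) x u)"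
    using f by (simp add: Pp_Dx_Dx[symmetric] Dx_Dx Lapx_Pp)
  also have "\<dots> = (\<lambda>x u. 0)"
    using Pp_Pm_harmonic by simp
  finally show ?thesis
    by (simp add: fun_eq_iff eq_neg_iff_add_eq_0 add.commute)
qed

end

lemma D2_eq:
  fixes f :: "('n::{finite,linorder}) clfun"
  assumes "smooth2 f"
  shows "D2 k f = (\<lambda>x u. - Dx (Dx f) x u
     - (4 / (real CARD('n) + 2 * real k - 2)) *\<^sub>R uDx (DuDx f) x u
     - (4 / ((real CARD('n) + 2 * real k - 2) * (real CARD('n) + 2 * real k - 4)))
         *\<^sub>R Umul (Umul (DuDx (DuDx f))) x u)"
  using assms by (simp add: D2_def Dx_Dx Umul_Umul)

lemmas commutation_relations = Du_Umul Du_uDx Du_Dx Du_DuDx Du_Du DuDx_Umul DuDx_uDx DuDx_Dx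
  Dx_Umul Dx_uDx uDx_Umul Eu_Umul Eu_uDx Eu_Dx Eu_DuDx Eu_Du Lapu_Dx Lapu_DuDx Lapu_Du Lapu_Umul Lapu_uDx

lemmas linearity = Umul_simps Dx_simps Du_simps uDx_simps DuDx_simps Eu_simps Lapu_simps
  smooth2_add smooth2_scaleR smooth2_minus smooth2_diff smooth2_zero

text \<open>After rewriting with the commutation relations, both sides are linear combinations of
  normally ordered operator monomials applied to \<open>f\<close>, and what remains is a polynomial identity
  in \<open>1/(m+2k-2)\<close> and \<open>1/(m+2k-4)\<close>, checked componentwise.\<close>

lemma D2_decomposition:
  fixes f :: "('n::{finite,linorder}) clfun"
  assumes f: "smooth2 f" and E: "Eu f = (\<lambda>x u. real k *\<^sub>R f x u)" and L: "Lapu f = (\<lambda>x u. 0)"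
    and n: "real CARD('n) + 2 * real k - 2 \<noteq> 0" and n': "real CARD('n) + 2 * real k - 4 \<noteq> 0"
  shows "D2 k f = (\<lambda>x u.
            - R k (R k (Pp k f)) x u
            + (2 / (real CARD('n) + 2 * real k - 4)) *\<^sub>R Tstar k (R k (Pp k f)) x u
            - (2 / (real CARD('n) + 2 * real k - 4)) *\<^sub>R T k (Q k (Pm k f)) x u
            - ((real CARD('n) + 2 * real k) / (real CARD('n) + 2 * real k - 4)) *\<^sub>R Q k (Q k (Pm k f)) x u)"
proof -
  define p where "p = 1 / (real CARD('n) + 2 * real k - 2)"
  define q where "q = 1 / (real CARD('n) + 2 * real k - 4)"
  have coeffs: "1 / (real CARD('n) + 2 * real k - 2) = p" "4 / (real CARD('n) + 2 * real k - 2) = 4 * p"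
    "2 / (real CARD('n) + 2 * real k - 4) = 2 * q"
    "(real CARD('n) + 2 * real k) / (real CARD('n) + 2 * real k - 4) = (real CARD('n) + 2 * real k) * q"
    "4 / ((real CARD('n) + 2 * real k - 2) * (real CARD('n) + 2 * real k - 4)) = 4 * p * q"
    by (simp_all add: p_def q_def)
  have "p * (real CARD('n) + 2 * real k - 2) = 1" "q * (real CARD('n) + 2 * real k - 4) = 1"
    using n n' by (simp_all add: p_def q_def)
  then have "complex_of_real (p * (real CARD('n) + 2 * real k - 2)) = 1"
    "complex_of_real (q * (real CARD('n) + 2 * real k - 4)) = 1"
    by simp_all
  then have p: "complex_of_real p * (of_nat CARD('n) + 2 * of_nat k - 2) = 1"
    and q: "complex_of_real q * (of_nat CARD('n) + 2 * of_nat k - 4) = 1"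
    by simp_all
  show ?thesis
    unfolding D2_eq[OF f] R_def T_def Tstar_def Q_def Pp_eq Pm_eq coeffs
    apply (simp only: commutation_relations E L linearity f)
    apply (intro ext)
    apply (subst vec_eq_iff, intro allI)
    apply (simp only: vector_add_component vector_minus_component vector_uminus_component
        vector_scaleR_component zero_index scaleR_conv_of_real[where 'a=complex] of_real_mult
        of_real_add of_real_diff of_real_numeral of_real_of_nat_eq of_real_minus)
    using p q by algebra
qed

text \<open>As formulas, \<open>T\<^sub>k = R\<^sub>k = P\<^sup>+D\<^sub>x\<close> and \<open>Q\<^sub>k = T\<^sub>k\<^sup>* = P\<^sup>-D\<^sub>x\<close>; the operators differ only in their
  intended domains.\<close>

lemma T_eq_R: "T = R"
  by (simp add: fun_eq_iff T_def R_def)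

lemma Q_eq_Tstar: "Q = Tstar"
  by (simp add: fun_eq_iff Q_def Tstar_def)

theorem proposition4p1:
  fixes f :: "(real, 'n::{finite,linorder}) vec \<Rightarrow> (real, 'n) vec \<Rightarrow> 'n cl" and k :: nat
  assumes "CARD('n) \<ge> 3" and "k \<ge> 1"
    and "real CARD('n) + 2 * real k - 4 \<noteq> 0"
    and "smooth (\<lambda>p. f (fst p) (snd p))"
    and "\<forall>x. in_H k (f x)"
  shows "D2 k f = (\<lambda>x u.
            - R k (R k (Pp k f)) x u
            + (2 / (real CARD('n) + 2 * real k - 4)) *\<^sub>R Tstar k (R k (Pp k f)) x u
            - (2 / (real CARD('n) + 2 * real k - 4)) *\<^sub>R T k (Q k (Pm k f)) x u
            - ((real CARD('n) + 2 * real k) / (real CARD('n) + 2 * real k - 4)) *\<^sub>R Q k (Q k (Pm k f)) x u)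
       \<and> D2 k f = (\<lambda>x u.
            - R k (R k (Pp k f)) x u
            + (2 / (real CARD('n) + 2 * real k - 4)) *\<^sub>R R k (T k (Pm k f)) x u
            - (2 / (real CARD('n) + 2 * real k - 4)) *\<^sub>R Q k (Tstar k (Pp k f)) x u
            - ((real CARD('n) + 2 * real k) / (real CARD('n) + 2 * real k - 4)) *\<^sub>R Q k (Q k (Pm k f)) x u)"
proof -
  have f: "smooth2 f" using assms(4) unfolding smooth2_def .
  have E: "Eu f = (\<lambda>x u. real k *\<^sub>R f x u)" and L: "Lapu f = (\<lambda>x u. 0)"
    using Eu_hom_poly[OF f] Lapu_harmonic assms(5) unfolding in_H_def by blast+
  have n: "real CARD('n) + 2 * real k - 2 \<noteq> 0" using assms(1) by simp
  note first = D2_decomposition[OF f E L n assms(3)]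
  have "Tstar k (R k (Pp k f)) = (\<lambda>x u. - Q k (Tstar k (Pp k f)) x u)"
    using Tstar_R_Pp_harmonic[OF f E L n] by (simp only: Q_eq_Tstar)
  moreover have "T k (Q k (Pm k f)) = (\<lambda>x u. - R k (T k (Pm k f)) x u)"
    using R_Tstar_Pm_harmonic[OF f E L n] by (simp only: T_eq_R Q_eq_Tstar)
  ultimately show ?thesis
    unfolding first by (simp add: algebra_simps)
qed

end
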